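(* Let $\mathbf G_1$ and $\mathbf G_2$ be genera. Then $\mathrm{Gen}[\mathbf G_1\mathbf G_2](\mathbf y)=\mathrm{Gen}[\mathbf G_1](\mathbf y)\,\mathrm{Gen}[\mathbf G_2](\mathbf y)$.
   Context: **Category.** Let $\mathbf{Part}$ be the category whose objects are pairs $(S,\pi)$, with $S$ a finite set and $\pi$ a set partition of $S$. A morphism $(S,\pi)\to(S',\pi')$ is a bijection $f:S\to S'$ carrying the blocks of $\pi$ to the blocks of $\pi'$. **Genus.** A genus $\mathbf G$ is a functor from $\mathbf{Part}$ to the category of finite sets and bijections, with exactly one structure on the empty partition and at least one structure on the partition of a one-element set. The type of $\pi$ is the integer partition $\lambda$ listing its block sizes. The number $G_\lambda=|\mathbf G[\pi]|$ depends only on the type $\lambda$ of $\pi$. **Generating function.** It is $$\mathrm{Gen}[\mathbf G](\mathbf y)=\sum_{\lambda}G_\lambda\,\frac{m_\lambda(\mathbf y)}{\lambda!},\qquad \lambda!=\prod_i\lambda_i!,$$ where $m_\lambda$ is the monomial symmetric function in $\mathbf y=(y_1,y_2,\dots)$. **Product.** The product genus $\mathbf G_1\mathbf G_2$ assigns to $\pi\vdash S$ the set of quadruples $(S_1,S_2,A_1,A_2)$ such that: - $S_1,S_2$ are disjoint with $S_1\cup S_2=S$; - $A_i\in\mathbf G_i[\pi|_{S_i}]$, where $\pi|_{S_i}$ is the partition of $S_i$ formed by the nonempty intersections of the blocks of $\pi$ with $S_i$. *)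

theory Defs
  imports Complex_Main "HOL-Library.Disjoint_Sets" "HOL-Library.Multiset" "HOL-Library.Poly_Mapping"
begin

text \<open>Finite sets are taken to be finite subsets of nat; a set partition pi of S is a
  set of nonempty pairwise disjoint blocks with union S (so S is recovered as the union of pi).\<close>

definition is_part :: "nat set set \<Rightarrow> bool" where
  "is_part p \<longleftrightarrow> finite (\<Union>p) \<and> partition_on (\<Union>p) p"

definition part_mor :: "nat set set \<Rightarrow> nat set set \<Rightarrow> (nat \<Rightarrow> nat) \<Rightarrow> bool" where
  "part_mor p p' f \<longleftrightarrow> is_part p \<and> is_part p' \<and> bij_betw f (\<Union>p) (\<Union>p') \<and> (\<lambda>B. f ` B) ` p = p'"

text \<open>A functor from Part to finite sets: object part and morphism part (transport).\<close>
record 'b genus =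
  struct :: "nat set set \<Rightarrow> 'b set"
  transp :: "nat set set \<Rightarrow> (nat \<Rightarrow> nat) \<Rightarrow> 'b \<Rightarrow> 'b"

definition is_genus :: "'b genus \<Rightarrow> bool" where
  "is_genus G \<longleftrightarrow>
     (\<forall>p. is_part p \<longrightarrow> finite (struct G p)) \<and>
     (\<forall>p p' f. part_mor p p' f \<longrightarrow> transp G p f ` struct G p \<subseteq> struct G p') \<and>
     (\<forall>p f g. is_part p \<longrightarrow> (\<forall>x\<in>\<Union>p. f x = g x) \<longrightarrow>
        (\<forall>A\<in>struct G p. transp G p f A = transp G p g A)) \<and>
     (\<forall>p A. is_part p \<longrightarrow> A \<in> struct G p \<longrightarrow> transp G p id A = A) \<and>
     (\<forall>p p' p'' f g A. part_mor p p' f \<longrightarrow> part_mor p' p'' g \<longrightarrow> A \<in> struct G p \<longrightarrow>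
        transp G p (g \<circ> f) A = transp G p' g (transp G p f A)) \<and>
     card (struct G {}) = 1 \<and>
     (\<forall>x. struct G {{x}} \<noteq> {})"

definition ptype :: "nat set set \<Rightarrow> nat multiset" where
  "ptype p = image_mset card (mset_set p)"

definition int_parts :: "nat \<Rightarrow> nat multiset set" where
  "int_parts n = {l. set_mset l \<subseteq> {0<..} \<and> sum_mset l = n}"

text \<open>G_lambda = number of structures on a (any) partition of type lambda.\<close>
definition gcount :: "'b genus \<Rightarrow> nat multiset \<Rightarrow> nat" where
  "gcount G l = card (struct G (SOME p. is_part p \<and> ptype p = l))"

definition mfact :: "nat multiset \<Rightarrow> nat" where
  "mfact l = prod_mset (image_mset fact l)"

type_synonym fps_inf = "(nat \<Rightarrow>\<^sub>0 nat) \<Rightarrow> real"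

definition ps_mult :: "fps_inf \<Rightarrow> fps_inf \<Rightarrow> fps_inf" where
  "ps_mult A B a = (\<Sum>(b, c) \<in> {(b, c). b + c = a}. A b * B c)"

definition mdeg :: "(nat \<Rightarrow>\<^sub>0 nat) \<Rightarrow> nat" where
  "mdeg a = (\<Sum>i\<in>Poly_Mapping.keys a. Poly_Mapping.lookup a i)"

text \<open>Monomial symmetric function m_lambda: coefficient 1 at exactly those monomials
  whose multiset of nonzero exponents is lambda.\<close>
definition monsym :: "nat multiset \<Rightarrow> fps_inf" where
  "monsym l a = (if image_mset (Poly_Mapping.lookup a) (mset_set (Poly_Mapping.keys a)) = l then 1 else 0)"

text \<open>Gen[G] = sum over all integer partitions lambda of G_lambda m_lambda / lambda!;
  coefficientwise only partitions of the total degree contribute.\<close>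
definition Gen :: "'b genus \<Rightarrow> fps_inf" where
  "Gen G a = (\<Sum>l\<in>int_parts (mdeg a). real (gcount G l) * monsym l a / real (mfact l))"

definition prestr :: "nat set set \<Rightarrow> nat set \<Rightarrow> nat set set" where
  "prestr p T = (\<lambda>B. B \<inter> T) ` p - {{}}"

definition gprod :: "'b genus \<Rightarrow> 'c genus \<Rightarrow> (nat set \<times> nat set \<times> 'b \<times> 'c) genus" where
  "gprod G1 G2 =
     \<lparr> struct = (\<lambda>p. {(S1, S2, A1, A2). S1 \<inter> S2 = {} \<and> S1 \<union> S2 = \<Union>p \<and>
                        A1 \<in> struct G1 (prestr p S1) \<and> A2 \<in> struct G2 (prestr p S2)}),
       transp = (\<lambda>p f (S1, S2, A1, A2).
                   (f ` S1, f ` S2, transp G1 (prestr p S1) f A1, transp G2 (prestr p S2) f A2)) \<rparr>"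

end

theory Submission
  imports Defs "HOL-Library.Nat_Bijection"
begin

text \<open>
  The coefficient of a monomial \<open>y\<^sup>a\<close> in \<open>Gen[G]\<close> is \<open>G\<^sub>\<lambda> / \<lambda>!\<close>, where \<open>\<lambda>\<close> is the multiset of
  nonzero exponents of \<open>a\<close>; \<open>G\<^sub>\<lambda>\<close> is well defined because transport along an isomorphism of
  partitions is injective. Realise \<open>\<lambda>\<close> by a partition whose blocks \<open>\<beta>\<^sub>i\<close> have \<open>a\<^sub>i\<close> elements.
  A \<open>G\<^sub>1G\<^sub>2\<close>-structure is a subset \<open>S\<close> of the ground set together with structures on the
  restrictions to \<open>S\<close> and to its complement, whose types are those of \<open>y\<^sup>b\<close> and \<open>y\<^sup>c\<close> with
  \<open>b\<^sub>i = |\<beta>\<^sub>i \<inter> S|\<close> and \<open>b + c = a\<close>. For each such splitting there are \<open>\<Prod>\<^sub>i (a\<^sub>i choose b\<^sub>i)\<close>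
  subsets \<open>S\<close>, and \<open>(a\<^sub>i choose b\<^sub>i) b\<^sub>i! c\<^sub>i! = a\<^sub>i!\<close> turns the count divided by \<open>a!\<close> into the
  coefficient of \<open>y\<^sup>a\<close> in \<open>Gen[G\<^sub>1] Gen[G\<^sub>2]\<close>.
\<close>

lemma image_mset_eq_imp_bij_betw:
  assumes "finite A" "finite B" "image_mset f (mset_set A) = image_mset g (mset_set B)"
  shows "\<exists>h. bij_betw h A B \<and> (\<forall>x\<in>A. g (h x) = f x)"
  using assms
proof (induction A arbitrary: B rule: finite_induct)
  case empty
  then have "B = {}" by (metis image_mset_is_empty_iff mset_set.infinite mset_set_empty_iff)
  then show ?case by (simp add: bij_betw_def)
next
  case (insert x A)
  have "f x \<in># image_mset g (mset_set B)"
    using insert by (metis image_mset_add_mset mset_set.insert union_single_eq_member)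
  then obtain y where y: "y \<in> B" "g y = f x" using insert by auto
  have "mset_set B = add_mset y (mset_set (B - {y}))"
    using y insert by (simp add: mset_set.remove)
  then have "image_mset f (mset_set A) = image_mset g (mset_set (B - {y}))"
    using insert y by simp
  then obtain h where h: "bij_betw h A (B - {y})" "\<forall>x\<in>A. g (h x) = f x"
    using insert by blast
  have "bij_betw (h(x := y)) A (B - {y})"
    using h(1) insert(2) by (metis bij_betw_cong fun_upd_other)
  then have "bij_betw (h(x := y)) (insert x A) B"
    using notIn_Un_bij_betw3[of x A "h(x := y)" "B - {y}"] insert(2) y(1) by (simp add: insert_absorb)
  moreover have "\<forall>z\<in>insert x A. g ((h(x := y)) z) = f z" using h y insert(2) by auto
  ultimately show ?case by blast
qed

lemma finite_part: "is_part p \<Longrightarrow> finite p"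
  unfolding is_part_def using finite_UnionD by blast

lemma finite_block: "is_part p \<Longrightarrow> B \<in> p \<Longrightarrow> finite B"
  unfolding is_part_def by (meson Union_upper finite_subset)

lemma part_block_eq: "is_part p \<Longrightarrow> B \<in> p \<Longrightarrow> C \<in> p \<Longrightarrow> x \<in> B \<Longrightarrow> x \<in> C \<Longrightarrow> B = C"
  unfolding is_part_def partition_on_def disjoint_def by blast

lemma is_part_prestr:
  assumes "is_part p"
  shows "is_part (prestr p S)"
proof -
  have "(\<lambda>B. B \<inter> S) = (\<inter>) S" by auto
  then have "partition_on (S \<inter> \<Union>p) (prestr p S)"
    unfolding prestr_def using assms partition_on_restrict unfolding is_part_def by metis
  moreover from this have "\<Union>(prestr p S) = S \<inter> \<Union>p" using partition_onD1 by metis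
  ultimately show ?thesis using assms unfolding is_part_def by simp
qed

lemma part_mor_if_bij_blocks:
  assumes p: "is_part p" and p': "is_part p'" and h: "bij_betw h p p'"
    and \<Phi>: "\<forall>B\<in>p. bij_betw (\<Phi> B) B (h B)"
  shows "\<exists>f. part_mor p p' f"
proof -
  have h_block: "B \<in> p \<Longrightarrow> h B \<in> p'" for B by (meson bij_betw_apply h)
  define block where "block x = (THE B. B \<in> p \<and> x \<in> B)" for x
  have block: "block x = B" if B: "B \<in> p" and x: "x \<in> B" for B x
    unfolding block_def
  proof (rule the_equality)
    show "B \<in> p \<and> x \<in> B" using B x ..
  next
    fix C assume "C \<in> p \<and> x \<in> C"
    then show "C = B" using part_block_eq[OF p _ B] x by blast
  qed
  define f where "f x = \<Phi> (block x) x" for x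
  have f_block: "f ` B = h B" if B: "B \<in> p" for B
  proof -
    have "f ` B = \<Phi> B ` B" unfolding f_def by (rule image_cong) (simp_all add: block[OF B])
    also have "\<dots> = h B" using \<Phi> B by (simp add: bij_betw_def)
    finally show ?thesis .
  qed
  have "(\<lambda>B. f ` B) ` p = h ` p" by (rule image_cong) (simp_all add: f_block)
  also have "\<dots> = p'" using h by (simp add: bij_betw_def)
  finally have blocks: "(\<lambda>B. f ` B) ` p = p'" .
  have "inj_on f (\<Union>p)"
  proof (rule inj_onI)
    fix x y assume "x \<in> \<Union>p" "y \<in> \<Union>p" and eq: "f x = f y"
    then obtain B C where B: "B \<in> p" "x \<in> B" and C: "C \<in> p" "y \<in> C" by auto
    have "f x \<in> h B" "f y \<in> h C" using f_block B C by blast+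
    then have "h B = h C" using part_block_eq[OF p' h_block[OF B(1)] h_block[OF C(1)]] eq by simp
    then have "B = C" using h B(1) C(1) by (simp add: bij_betw_def inj_on_def)
    then have "\<Phi> B x = \<Phi> B y" using eq block[OF B] block[OF C] unfolding f_def by simp
    moreover have "inj_on (\<Phi> B) B" using \<Phi> B(1) by (simp add: bij_betw_def)
    ultimately show "x = y" using B(2) C(2) \<open>B = C\<close> by (simp add: inj_on_def)
  qed
  moreover have "f ` \<Union>p = \<Union>p'" using blocks by (simp add: image_Union)
  ultimately show ?thesis unfolding part_mor_def bij_betw_def using p p' blocks by blast
qed

lemma ptype_eq_imp_part_mor:
  assumes p: "is_part p" and p': "is_part p'" and type: "ptype p = ptype p'"
  shows "\<exists>f. part_mor p p' f"
proof -
  obtain h where h: "bij_betw h p p'" and card_h: "\<And>B. B \<in> p \<Longrightarrow> card (h B) = card B"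
    using image_mset_eq_imp_bij_betw[OF finite_part[OF p] finite_part[OF p']] type
    unfolding ptype_def by metis
  have "\<forall>B\<in>p. \<exists>\<phi>. bij_betw \<phi> B (h B)"
  proof
    fix B assume B: "B \<in> p"
    have "h B \<in> p'" using B h by (meson bij_betw_apply)
    then show "\<exists>\<phi>. bij_betw \<phi> B (h B)"
      using finite_same_card_bij[OF finite_block[OF p B] finite_block[OF p']] card_h[OF B] by simp
  qed
  from bchoice[OF this] obtain \<Phi> where "\<forall>B\<in>p. bij_betw (\<Phi> B) B (h B)" ..
  then show ?thesis by (rule part_mor_if_bij_blocks[OF p p' h])
qed

lemma
  assumes "is_genus G"
  shows finite_struct: "is_part p \<Longrightarrow> finite (struct G p)"
    and transp_struct: "part_mor p p' f \<Longrightarrow> A \<in> struct G p \<Longrightarrow> transp G p f A \<in> struct G p'"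
    and transp_cong: "is_part p \<Longrightarrow> (\<And>x. x \<in> \<Union>p \<Longrightarrow> f x = g x) \<Longrightarrow> A \<in> struct G p \<Longrightarrow>
      transp G p f A = transp G p g A"
    and transp_id: "is_part p \<Longrightarrow> A \<in> struct G p \<Longrightarrow> transp G p id A = A"
    and transp_comp: "part_mor p p' f \<Longrightarrow> part_mor p' p'' g \<Longrightarrow> A \<in> struct G p \<Longrightarrow>
      transp G p (g \<circ> f) A = transp G p' g (transp G p f A)"
  using assms unfolding is_genus_def by (simp_all add: image_subset_iff) blast

lemma part_mor_inv_into:
  assumes m: "part_mor p p' f"
  shows "part_mor p' p (inv_into (\<Union>p) f)"
proof -
  have pp: "is_part p" "is_part p'" and bij: "bij_betw f (\<Union>p) (\<Union>p')"
    and blocks: "(\<lambda>B. f ` B) ` p = p'" using m unfolding part_mor_def by auto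
  have "(\<lambda>B. inv_into (\<Union>p) f ` B) ` p' = (\<lambda>B. inv_into (\<Union>p) f ` f ` B) ` p"
    using blocks by auto
  also have "\<dots> = p"
    using bij_betw_imp_inj_on[OF bij] by (simp add: Sup_upper inv_into_image_cancel)
  finally have "(\<lambda>B. inv_into (\<Union>p) f ` B) ` p' = p" .
  then show ?thesis unfolding part_mor_def using pp bij_betw_inv_into[OF bij] by simp
qed

lemma card_struct_le_part_mor:
  assumes G: "is_genus G" and m: "part_mor p p' f"
  shows "card (struct G p) \<le> card (struct G p')"
proof -
  define g where "g = inv_into (\<Union>p) f"
  have m': "part_mor p' p g" unfolding g_def using m by (rule part_mor_inv_into)
  have p: "is_part p" "is_part p'" and inj_f: "inj_on f (\<Union>p)"
    using m unfolding part_mor_def bij_betw_def by auto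
  have "inj_on (transp G p f) (struct G p)"
  proof (rule inj_on_inverseI)
    fix A assume A: "A \<in> struct G p"
    have "transp G p' g (transp G p f A) = transp G p (g \<circ> f) A"
      using transp_comp[OF G m m' A] by (rule sym)
    also have "\<dots> = transp G p id A"
      by (rule transp_cong[OF G p(1) _ A]) (use inj_f in \<open>simp add: g_def\<close>)
    also have "\<dots> = A" using transp_id[OF G p(1) A] .
    finally show "transp G p' g (transp G p f A) = A" .
  qed
  moreover have "transp G p f ` struct G p \<subseteq> struct G p'" using transp_struct[OF G m] by blast
  ultimately show ?thesis by (rule card_inj_on_le[OF _ _ finite_struct[OF G p(2)]])
qed

lemma card_struct_eq_gcount:
  assumes G: "is_genus G" and q: "is_part q"
  shows "card (struct G q) = gcount G (ptype q)"
proof -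
  define q' where "q' = (SOME p. is_part p \<and> ptype p = ptype q)"
  have q': "is_part q'" "ptype q' = ptype q"
    unfolding q'_def using someI[of "\<lambda>p. is_part p \<and> ptype p = ptype q" q] q by auto
  obtain f where f: "part_mor q q' f" using ptype_eq_imp_part_mor q q' by metis
  obtain g where g: "part_mor q' q g" using ptype_eq_imp_part_mor q q' by metis
  show ?thesis unfolding gcount_def q'_def[symmetric]
    using card_struct_le_part_mor[OF G f] card_struct_le_part_mor[OF G g] by simp
qed

definition monomial_type :: "(nat \<Rightarrow>\<^sub>0 nat) \<Rightarrow> nat multiset" where
  "monomial_type a = image_mset (Poly_Mapping.lookup a) (mset_set (Poly_Mapping.keys a))"

lemma finite_int_parts: "finite (int_parts n)"
proof -
  have size_le: "size M \<le> sum_mset M" if "set_mset M \<subseteq> {0<..}" for M :: "nat multiset"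
    using that by (induction M) auto
  have elem_le: "x \<le> sum_mset M" if "x \<in># M" for x and M :: "nat multiset"
    using that by (induction M) auto
  have "int_parts n \<subseteq> (\<Union>m\<le>n. multisets_of_size {..n} m)"
    unfolding int_parts_def multisets_of_size_def using size_le elem_le by fastforce
  then show ?thesis by (rule finite_subset) (simp add: finite_multisets_of_size)
qed

lemma monomial_type_in_int_parts: "monomial_type a \<in> int_parts (mdeg a)"
  unfolding int_parts_def monomial_type_def mdeg_def
  by (auto simp: sum_unfold_sum_mset in_keys_iff)

lemma Gen_coeff: "Gen G a = real (gcount G (monomial_type a)) / real (mfact (monomial_type a))"
proof -
  have summand: "(\<lambda>l. real (gcount G l) * monsym l a / real (mfact l))
      = (\<lambda>l. if l = monomial_type a then real (gcount G l) / real (mfact l) else 0)"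
    by (auto simp: fun_eq_iff monsym_def monomial_type_def)
  show ?thesis unfolding Gen_def summand using finite_int_parts monomial_type_in_int_parts by simp
qed

lemma mfact_monomial_type:
  assumes "finite K" "Poly_Mapping.keys a \<subseteq> K"
  shows "mfact (monomial_type a) = (\<Prod>i\<in>K. fact (Poly_Mapping.lookup a i))"
proof -
  have "mfact (monomial_type a) = (\<Prod>i\<in>Poly_Mapping.keys a. fact (Poly_Mapping.lookup a i))"
    unfolding mfact_def monomial_type_def
    by (simp add: prod_unfold_prod_mset image_mset.compositionality comp_def)
  also have "\<dots> = (\<Prod>i\<in>K. fact (Poly_Mapping.lookup a i))"
    using assms by (intro prod.mono_neutral_left) (auto simp: in_keys_iff)
  finally show ?thesis .
qed

lemma mfact_monomial_type_pos: "mfact (monomial_type a) > 0"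
  by (simp add: mfact_monomial_type[OF finite_keys order_refl])

lemma binomial_mfact_monomial_type:
  assumes "b + c = a"
  shows "(\<Prod>i\<in>Poly_Mapping.keys a. Poly_Mapping.lookup a i choose Poly_Mapping.lookup b i)
           * mfact (monomial_type b) * mfact (monomial_type c) = mfact (monomial_type a)"
proof -
  have lookup_a: "Poly_Mapping.lookup a i = Poly_Mapping.lookup b i + Poly_Mapping.lookup c i" for i
    using assms by (auto simp: lookup_add)
  have keys_b: "Poly_Mapping.keys b \<subseteq> Poly_Mapping.keys a"
    and keys_c: "Poly_Mapping.keys c \<subseteq> Poly_Mapping.keys a"
    by (auto simp: in_keys_iff lookup_a)
  have "(\<Prod>i\<in>Poly_Mapping.keys a. Poly_Mapping.lookup a i choose Poly_Mapping.lookup b i)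
           * mfact (monomial_type b) * mfact (monomial_type c)
      = (\<Prod>i\<in>Poly_Mapping.keys a. (Poly_Mapping.lookup a i choose Poly_Mapping.lookup b i)
           * fact (Poly_Mapping.lookup b i) * fact (Poly_Mapping.lookup c i))"
    unfolding mfact_monomial_type[OF finite_keys keys_b] mfact_monomial_type[OF finite_keys keys_c]
      prod.distrib ..
  also have "\<dots> = (\<Prod>i\<in>Poly_Mapping.keys a. fact (Poly_Mapping.lookup a i))"
  proof (rule prod.cong)
    fix i
    show "(Poly_Mapping.lookup a i choose Poly_Mapping.lookup b i)
        * fact (Poly_Mapping.lookup b i) * fact (Poly_Mapping.lookup c i) = fact (Poly_Mapping.lookup a i)"
      using binomial_fact_lemma[of "Poly_Mapping.lookup b i" "Poly_Mapping.lookup a i"]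
      by (simp add: lookup_a algebra_simps)
  qed simp
  also have "\<dots> = mfact (monomial_type a)" by (rule mfact_monomial_type[OF finite_keys order_refl, symmetric])
  finally show ?thesis .
qed

lemma prod_choose_pos:
  assumes "b + c = a"
  shows "(\<Prod>i\<in>Poly_Mapping.keys a. Poly_Mapping.lookup a i choose Poly_Mapping.lookup b i) > 0"
  using assms by (auto simp: lookup_add not_less[symmetric] intro!: prod_pos)

lemma ex_part_of_monomial_type: "\<exists>p. is_part p \<and> ptype p = monomial_type a"
proof -
  define E where "E i = (\<lambda>j. prod_encode (i, j)) ` {..<Poly_Mapping.lookup a i}" for i
  define p where "p = E ` Poly_Mapping.keys a"
  have card_E: "card (E i) = Poly_Mapping.lookup a i" for i
    unfolding E_def by (subst card_image) (auto simp: inj_on_def prod_encode_eq)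
  have disjoint_E: "i \<noteq> j \<Longrightarrow> E i \<inter> E j = {}" for i j
    unfolding E_def by (auto simp: prod_encode_eq)
  have nonempty_E: "i \<in> Poly_Mapping.keys a \<Longrightarrow> E i \<noteq> {}" for i
    using card_E[of i] by (auto simp: in_keys_iff)
  have inj_E: "inj_on E (Poly_Mapping.keys a)"
  proof (rule inj_onI)
    fix i j assume "i \<in> Poly_Mapping.keys a" "E i = E j"
    then show "i = j" using disjoint_E[of i j] nonempty_E[of i] by auto
  qed
  have "disjoint p"
  proof (rule disjointI)
    fix A B assume "A \<in> p" "B \<in> p" "A \<noteq> B"
    then obtain i j where "A = E i" "B = E j" "i \<noteq> j" unfolding p_def by auto
    then show "A \<inter> B = {}" by (simp add: disjoint_E)
  qed
  moreover have "{} \<notin> p" unfolding p_def using nonempty_E by (metis imageE)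
  moreover have "finite (\<Union>p)" unfolding p_def E_def by simp
  ultimately have "is_part p" unfolding is_part_def partition_on_def by simp
  moreover have "ptype p = monomial_type a"
    unfolding ptype_def p_def monomial_type_def using image_mset_mset_set[OF inj_E, symmetric]
    by (simp add: image_mset.compositionality comp_def card_E)
  ultimately show ?thesis by blast
qed

lemma card_struct_gprod:
  assumes G1: "is_genus G1" and G2: "is_genus G2" and q: "is_part q"
  shows "card (struct (gprod G1 G2) q)
    = (\<Sum>S\<in>Pow (\<Union>q). card (struct G1 (prestr q S)) * card (struct G2 (prestr q (\<Union>q - S))))"
proof -
  define \<Sigma> where "\<Sigma> = (SIGMA S:Pow (\<Union>q). struct G1 (prestr q S) \<times> struct G2 (prestr q (\<Union>q - S)))"
  define \<phi> where "\<phi> = (\<lambda>(S, A1 :: 'a, A2 :: 'b). (S, \<Union>q - S, A1, A2))"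
  have "struct (gprod G1 G2) q = \<phi> ` \<Sigma>"
  proof (rule set_eqI)
    fix x :: "nat set \<times> nat set \<times> 'a \<times> 'b"
    obtain S1 S2 A1 A2 where x: "x = (S1, S2, A1, A2)" by (cases x) auto
    show "x \<in> struct (gprod G1 G2) q \<longleftrightarrow> x \<in> \<phi> ` \<Sigma>"
    proof
      assume "x \<in> struct (gprod G1 G2) q"
      then have S2: "S2 = \<Union>q - S1" unfolding x gprod_def by auto
      with \<open>x \<in> struct (gprod G1 G2) q\<close> have "(S1, A1, A2) \<in> \<Sigma>"
        unfolding x gprod_def \<Sigma>_def by auto
      with S2 show "x \<in> \<phi> ` \<Sigma>" unfolding x \<phi>_def by (simp add: rev_image_eqI)
    next
      assume "x \<in> \<phi> ` \<Sigma>"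
      then show "x \<in> struct (gprod G1 G2) q" unfolding \<Sigma>_def \<phi>_def gprod_def by auto
    qed
  qed
  moreover have "inj_on \<phi> \<Sigma>" unfolding \<phi>_def by (rule inj_onI) auto
  ultimately have "card (struct (gprod G1 G2) q) = card \<Sigma>" by (simp add: card_image)
  also have "\<dots> = (\<Sum>S\<in>Pow (\<Union>q). card (struct G1 (prestr q S)) * card (struct G2 (prestr q (\<Union>q - S))))"
    unfolding \<Sigma>_def
    using q finite_struct[OF G1 is_part_prestr[OF q]] finite_struct[OF G2 is_part_prestr[OF q]]
    by (simp add: card_SigmaI card_cartesian_product is_part_def)
  finally show ?thesis .
qed

lemma card_subsets_with_block_sizes:
  assumes "finite I" and disjoint: "disjoint_family_on \<beta> I" and "\<And>i. i \<in> I \<Longrightarrow> finite (\<beta> i)"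
  shows "card {S. S \<subseteq> (\<Union>i\<in>I. \<beta> i) \<and> (\<forall>i\<in>I. card (\<beta> i \<inter> S) = k i)}
       = (\<Prod>i\<in>I. card (\<beta> i) choose k i)"
proof -
  define T where "T i = {X. X \<subseteq> \<beta> i \<and> card X = k i}" for i
  have block_Union: "\<beta> i \<inter> (\<Union>j\<in>I. F j) = F i" if F: "F \<in> PiE I T" and i: "i \<in> I" for F i
  proof -
    have sub: "F j \<subseteq> \<beta> j" if "j \<in> I" for j using F that unfolding T_def by auto
    show ?thesis
    proof
      show "F i \<subseteq> \<beta> i \<inter> (\<Union>j\<in>I. F j)" using sub i by blast
      show "\<beta> i \<inter> (\<Union>j\<in>I. F j) \<subseteq> F i"
      proof
        fix x assume "x \<in> \<beta> i \<inter> (\<Union>j\<in>I. F j)"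
        then obtain j where j: "j \<in> I" "x \<in> F j" "x \<in> \<beta> i" by auto
        then have "j = i" using sub[OF j(1)] disjoint i unfolding disjoint_family_on_def by blast
        then show "x \<in> F i" using j by simp
      qed
    qed
  qed
  have "bij_betw (\<lambda>S. restrict (\<lambda>i. \<beta> i \<inter> S) I)
          {S. S \<subseteq> (\<Union>i\<in>I. \<beta> i) \<and> (\<forall>i\<in>I. card (\<beta> i \<inter> S) = k i)} (PiE I T)"
  proof (rule bij_betw_byWitness[where f' = "\<lambda>F. \<Union>i\<in>I. F i"])
    show "\<forall>F\<in>PiE I T. restrict (\<lambda>i. \<beta> i \<inter> (\<Union>j\<in>I. F j)) I = F"
    proof
      fix F assume F: "F \<in> PiE I T"
      show "restrict (\<lambda>i. \<beta> i \<inter> (\<Union>j\<in>I. F j)) I = F"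
        using PiE_restrict[OF F] block_Union[OF F] by (metis (no_types, lifting) restrict_ext)
    qed
    show "(\<lambda>F. \<Union>i\<in>I. F i) ` PiE I T \<subseteq> {S. S \<subseteq> (\<Union>i\<in>I. \<beta> i) \<and> (\<forall>i\<in>I. card (\<beta> i \<inter> S) = k i)}"
      using block_Union unfolding T_def by (auto simp: PiE_def Pi_def)
  qed (auto simp: T_def)
  then have "card {S. S \<subseteq> (\<Union>i\<in>I. \<beta> i) \<and> (\<forall>i\<in>I. card (\<beta> i \<inter> S) = k i)} = card (PiE I T)"
    by (rule bij_betw_same_card)
  also have "\<dots> = (\<Prod>i\<in>I. card (T i))" using assms(1) by (rule card_PiE)
  also have "\<dots> = (\<Prod>i\<in>I. card (\<beta> i) choose k i)"
    unfolding T_def using assms(3) by (simp add: n_subsets)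
  finally show ?thesis .
qed

locale indexed_partition =
  fixes q :: "nat set set" and a :: "nat \<Rightarrow>\<^sub>0 nat" and \<beta> :: "nat \<Rightarrow> nat set"
  assumes part: "is_part q"
    and bij_blocks: "bij_betw \<beta> (Poly_Mapping.keys a) q"
    and card_block: "\<And>i. i \<in> Poly_Mapping.keys a \<Longrightarrow> card (\<beta> i) = Poly_Mapping.lookup a i"
begin

lemma blocks_eq: "q = \<beta> ` Poly_Mapping.keys a"
  using bij_blocks by (simp add: bij_betw_def)

lemma Union_blocks: "\<Union>q = (\<Union>i\<in>Poly_Mapping.keys a. \<beta> i)"
  by (simp add: blocks_eq)

lemma finite_block_index: "i \<in> Poly_Mapping.keys a \<Longrightarrow> finite (\<beta> i)"
  using finite_block[OF part] blocks_eq by blast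

lemma disjoint_blocks: "disjoint_family_on \<beta> (Poly_Mapping.keys a)"
  unfolding disjoint_family_on_def
proof (intro ballI impI)
  fix i j assume i: "i \<in> Poly_Mapping.keys a" and j: "j \<in> Poly_Mapping.keys a" and "i \<noteq> j"
  then have "\<beta> i \<noteq> \<beta> j" using bij_blocks by (metis bij_betw_imp_inj_on inj_onD)
  then show "\<beta> i \<inter> \<beta> j = {}"
    using part_block_eq[OF part] i j blocks_eq by blast
qed

definition block_count :: "nat set \<Rightarrow> nat \<Rightarrow>\<^sub>0 nat" where
  "block_count S = Abs_poly_mapping (\<lambda>i. if i \<in> Poly_Mapping.keys a then card (\<beta> i \<inter> S) else 0)"

lemma lookup_block_count:
  "Poly_Mapping.lookup (block_count S) i = (if i \<in> Poly_Mapping.keys a then card (\<beta> i \<inter> S) else 0)"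
proof -
  have "finite {i. (if i \<in> Poly_Mapping.keys a then card (\<beta> i \<inter> S) else 0) \<noteq> 0}"
    by (rule finite_subset[OF _ finite_keys[of a]]) (auto split: if_splits)
  then show ?thesis unfolding block_count_def by (simp add: lookup_Abs_poly_mapping)
qed

lemma ptype_prestr: "ptype (prestr q S) = monomial_type (block_count S)"
proof -
  define K where "K = {i \<in> Poly_Mapping.keys a. \<beta> i \<inter> S \<noteq> {}}"
  have "i \<in> Poly_Mapping.keys (block_count S) \<longleftrightarrow> i \<in> K" for i
  proof -
    have "i \<in> Poly_Mapping.keys (block_count S) \<longleftrightarrow> Poly_Mapping.lookup (block_count S) i \<noteq> 0"
      by (rule in_keys_iff)
    also have "\<dots> \<longleftrightarrow> i \<in> K"
      unfolding lookup_block_count K_def using finite_block_index[of i] by auto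
    finally show ?thesis .
  qed
  then have keys: "Poly_Mapping.keys (block_count S) = K" by blast
  have prestr: "prestr q S = (\<lambda>i. \<beta> i \<inter> S) ` K"
    unfolding prestr_def blocks_eq K_def by auto
  have "inj_on (\<lambda>i. \<beta> i \<inter> S) K"
    using disjoint_blocks unfolding K_def disjoint_family_on_def inj_on_def by blast
  then have "ptype (prestr q S) = image_mset (\<lambda>i. card (\<beta> i \<inter> S)) (mset_set K)"
    unfolding ptype_def prestr by (simp add: image_mset_mset_set[symmetric] image_mset.compositionality comp_def)
  also have "\<dots> = image_mset (Poly_Mapping.lookup (block_count S)) (mset_set K)"
    by (rule image_mset_cong) (auto simp: lookup_block_count K_def mset_set.infinite)
  finally show ?thesis unfolding monomial_type_def keys .
qed

lemma block_count_add_compl: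
  assumes "S \<subseteq> \<Union>q"
  shows "block_count S + block_count (\<Union>q - S) = a"
proof (rule poly_mapping_eqI)
  fix i
  show "Poly_Mapping.lookup (block_count S + block_count (\<Union>q - S)) i = Poly_Mapping.lookup a i"
  proof (cases "i \<in> Poly_Mapping.keys a")
    case True
    then have "\<beta> i \<inter> (\<Union>q - S) = \<beta> i - S" using Union_blocks by auto
    then show ?thesis
      using True card_Int_Diff[OF finite_block_index[OF True], of S] card_block[OF True]
      by (simp add: lookup_add lookup_block_count)
  qed (simp add: lookup_add lookup_block_count in_keys_iff)
qed

lemma card_block_count_fiber:
  assumes bc: "b + c = a"
  shows "card {S \<in> Pow (\<Union>q). (block_count S, block_count (\<Union>q - S)) = (b, c)}
       = (\<Prod>i\<in>Poly_Mapping.keys a. Poly_Mapping.lookup a i choose Poly_Mapping.lookup b i)"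
proof -
  have lookup_a: "Poly_Mapping.lookup a i = Poly_Mapping.lookup b i + Poly_Mapping.lookup c i" for i
    using bc by (auto simp: lookup_add)
  have "block_count S = b \<longleftrightarrow> (\<forall>i\<in>Poly_Mapping.keys a. card (\<beta> i \<inter> S) = Poly_Mapping.lookup b i)" for S
    by (auto simp: poly_mapping_eq_iff fun_eq_iff lookup_block_count in_keys_iff lookup_a)
  moreover have "block_count S = b \<Longrightarrow> block_count (\<Union>q - S) = c" if "S \<subseteq> \<Union>q" for S
    using block_count_add_compl[OF that] bc by (metis add_left_cancel)
  ultimately have "{S \<in> Pow (\<Union>q). (block_count S, block_count (\<Union>q - S)) = (b, c)}
      = {S. S \<subseteq> (\<Union>i\<in>Poly_Mapping.keys a. \<beta> i)
              \<and> (\<forall>i\<in>Poly_Mapping.keys a. card (\<beta> i \<inter> S) = Poly_Mapping.lookup b i)}"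
    unfolding Union_blocks by auto
  also have "card \<dots> = (\<Prod>i\<in>Poly_Mapping.keys a. card (\<beta> i) choose Poly_Mapping.lookup b i)"
    using card_subsets_with_block_sizes[OF finite_keys disjoint_blocks finite_block_index] .
  finally show ?thesis by (simp add: card_block)
qed

lemma sum_Pow_by_block_count:
  fixes f :: "(nat \<Rightarrow>\<^sub>0 nat) \<Rightarrow> (nat \<Rightarrow>\<^sub>0 nat) \<Rightarrow> real"
  shows "(\<Sum>S\<in>Pow (\<Union>q). f (block_count S) (block_count (\<Union>q - S)))
       = (\<Sum>(b, c)\<in>{(b, c). b + c = a}.
            real (\<Prod>i\<in>Poly_Mapping.keys a. Poly_Mapping.lookup a i choose Poly_Mapping.lookup b i) * f b c)"
proof -
  define h where "h S = (block_count S, block_count (\<Union>q - S))" for S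
  define P where "P = {(b, c). b + c = a}"
  have fiber: "card {S \<in> Pow (\<Union>q). h S = (b, c)}
      = (\<Prod>i\<in>Poly_Mapping.keys a. Poly_Mapping.lookup a i choose Poly_Mapping.lookup b i)"
    if "(b, c) \<in> P" for b c
    using card_block_count_fiber that unfolding h_def P_def by simp
  have "h ` Pow (\<Union>q) \<subseteq> P" unfolding h_def P_def using block_count_add_compl by auto
  moreover have "P \<subseteq> h ` Pow (\<Union>q)"
  proof
    fix y assume y: "y \<in> P"
    then obtain b c where bc: "y = (b, c)" "b + c = a" unfolding P_def by blast
    have "card {S \<in> Pow (\<Union>q). h S = y}
        = (\<Prod>i\<in>Poly_Mapping.keys a. Poly_Mapping.lookup a i choose Poly_Mapping.lookup b i)"
      using fiber y unfolding bc(1) by blast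
    then have "card {S \<in> Pow (\<Union>q). h S = y} \<noteq> 0" using prod_choose_pos[OF bc(2)] by linarith
    then have "{S \<in> Pow (\<Union>q). h S = y} \<noteq> {}" by (metis card.empty)
    then show "y \<in> h ` Pow (\<Union>q)" by blast
  qed
  ultimately have image_h: "h ` Pow (\<Union>q) = P" by blast
  have finite_Pow: "finite (Pow (\<Union>q))" using part unfolding is_part_def by simp
  have finite_P: "finite P" unfolding image_h[symmetric] using finite_Pow by (rule finite_imageI)
  have "(\<Sum>S\<in>Pow (\<Union>q). case_prod f (h S)) = (\<Sum>y\<in>P. \<Sum>S\<in>{S \<in> Pow (\<Union>q). h S = y}. case_prod f (h S))"
    by (rule sum.group[symmetric, OF finite_Pow finite_P equalityD1[OF image_h]])
  also have "\<dots> = (\<Sum>y\<in>P. real (card {S \<in> Pow (\<Union>q). h S = y}) * case_prod f y)"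
    by (intro sum.cong) simp_all
  also have "\<dots> = (\<Sum>(b, c)\<in>P.
      real (\<Prod>i\<in>Poly_Mapping.keys a. Poly_Mapping.lookup a i choose Poly_Mapping.lookup b i) * f b c)"
  proof (rule sum.cong[OF refl], clarify)
    fix b c assume "(b, c) \<in> P"
    then show "real (card {S \<in> Pow (\<Union>q). h S = (b, c)}) * f b c
      = real (\<Prod>i\<in>Poly_Mapping.keys a. Poly_Mapping.lookup a i choose Poly_Mapping.lookup b i) * f b c"
      by (simp only: fiber)
  qed
  finally show ?thesis unfolding h_def P_def by simp
qed

lemma Gen_gprod_coeff:
  assumes G1: "is_genus G1" and G2: "is_genus G2"
  shows "real (card (struct (gprod G1 G2) q)) / real (mfact (monomial_type a)) = ps_mult (Gen G1) (Gen G2) a"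
proof -
  let ?binom = "\<lambda>b. real (\<Prod>i\<in>Poly_Mapping.keys a. Poly_Mapping.lookup a i choose Poly_Mapping.lookup b i)"
  let ?count = "\<lambda>b c. real (gcount G1 (monomial_type b)) * real (gcount G2 (monomial_type c))"
  have summand: "(case y of (b, c) \<Rightarrow> ?binom b * ?count b c) / real (mfact (monomial_type a))
      = (case y of (b, c) \<Rightarrow> Gen G1 b * Gen G2 c)" if split: "y \<in> {(b, c). b + c = a}" for y
  proof -
    obtain b c where y: "y = (b, c)" and bc: "b + c = a" using split by blast
    have "real (mfact (monomial_type a))
        = ?binom b * real (mfact (monomial_type b)) * real (mfact (monomial_type c))"
      using binomial_mfact_monomial_type[OF bc] by (metis of_nat_mult)
    moreover have "?binom b \<noteq> 0" using prod_choose_pos[OF bc] by (simp add: not_less)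
    ultimately show ?thesis using mfact_monomial_type_pos[of b] mfact_monomial_type_pos[of c]
      unfolding y by (simp add: Gen_coeff)
  qed
  have "real (card (struct (gprod G1 G2) q)) / real (mfact (monomial_type a))
      = (\<Sum>S\<in>Pow (\<Union>q). ?count (block_count S) (block_count (\<Union>q - S))) / real (mfact (monomial_type a))"
    using card_struct_gprod[OF G1 G2 part] is_part_prestr[OF part]
    by (simp add: card_struct_eq_gcount[OF G1] card_struct_eq_gcount[OF G2] ptype_prestr)
  also have "\<dots> = (\<Sum>(b, c)\<in>{(b, c). b + c = a}. ?binom b * ?count b c) / real (mfact (monomial_type a))"
    by (simp only: sum_Pow_by_block_count[of ?count])
  also have "\<dots> = (\<Sum>(b, c)\<in>{(b, c). b + c = a}. Gen G1 b * Gen G2 c)"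
    unfolding sum_divide_distrib by (rule sum.cong[OF refl summand])
  also have "\<dots> = ps_mult (Gen G1) (Gen G2) a"
    unfolding ps_mult_def ..
  finally show ?thesis .
qed

end

lemma ex_indexed_partition:
  assumes "is_part q" and "ptype q = monomial_type a"
  shows "\<exists>\<beta>. indexed_partition q a \<beta>"
proof -
  obtain \<beta> where "bij_betw \<beta> (Poly_Mapping.keys a) q"
    and "\<forall>i\<in>Poly_Mapping.keys a. card (\<beta> i) = Poly_Mapping.lookup a i"
    using image_mset_eq_imp_bij_betw[OF finite_keys finite_part[OF assms(1)]] assms(2)
    unfolding ptype_def monomial_type_def by metis
  then show ?thesis using assms(1) by (auto intro: indexed_partition.intro)
qed

theorem mainTheorem13:
  fixes G1 :: "'b genus" and G2 :: "'c genus"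
  assumes "is_genus G1" and "is_genus G2"
  shows "Gen (gprod G1 G2) = ps_mult (Gen G1) (Gen G2)"
proof
  fix a
  \<comment> \<open>\<open>q\<close> is the partition chosen in \<open>gcount_def\<close>, so the product genus need not be shown
    invariant under isomorphism.\<close>
  define q where "q = (SOME p. is_part p \<and> ptype p = monomial_type a)"
  have "is_part q \<and> ptype q = monomial_type a"
    unfolding q_def by (rule someI_ex[OF ex_part_of_monomial_type])
  then obtain \<beta> where "indexed_partition q a \<beta>" using ex_indexed_partition by blast
  have "Gen (gprod G1 G2) a = real (card (struct (gprod G1 G2) q)) / real (mfact (monomial_type a))"
    unfolding Gen_coeff gcount_def q_def ..
  also have "\<dots> = ps_mult (Gen G1) (Gen G2) a"
    using indexed_partition.Gen_gprod_coeff[OF \<open>indexed_partition q a \<beta>\<close> assms] .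
  finally show "Gen (gprod G1 G2) a = ps_mult (Gen G1) (Gen G2) a" .
qed

end
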